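(* Let $X$ be a compact metric space with metric $d$ and let $f\colon X\to X$ be a continuous map. If $f$ has the $L$-Lipschitz shadowing property for some $0<L<1/2$, then $CR(f)=\overline{Per(f)}$.
   Context: For $\delta>0$, a sequence $(x_i)_{i\ge0}$ in $X$ is a $\delta$-pseudo orbit of $f$ if $d(f(x_i),x_{i+1})\le\delta$ for all $i\ge0$; it is $\epsilon$-shadowed by $x$ if $d(f^i(x),x_i)\le\epsilon$ for all $i\ge0$. For $L>0$, $f$ has the $L$-Lipschitz shadowing property if there is $\delta_0>0$ such that for every $0<\delta\le\delta_0$, every $\delta$-pseudo orbit of $f$ is $L\delta$-shadowed by some point of $X$. A $\delta$-chain is a finite sequence $(x_i)_{i=0}^k$, $k\ge1$, with $d(f(x_i),x_{i+1})\le\delta$ for $0\le i\le k-1$; it is a $\delta$-cycle if $x_0=x_k$. $CR(f)$ is the set of $x\in X$ such that for every $\delta>0$ there is a $\delta$-cycle $(x_i)_{i=0}^k$ with $x_0=x_k=x$. $Per(f)=\bigcup_{i>0}\{x\in X: f^i(x)=x\}$. *)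

theory Defs
  imports "HOL-Analysis.Analysis"
begin

definition pseudo_orbit :: "'a::metric_space set \<Rightarrow> ('a \<Rightarrow> 'a) \<Rightarrow> real \<Rightarrow> (nat \<Rightarrow> 'a) \<Rightarrow> bool" where
  "pseudo_orbit X f \<delta> xs \<longleftrightarrow> (\<forall>i. xs i \<in> X) \<and> (\<forall>i. dist (f (xs i)) (xs (Suc i)) \<le> \<delta>)"

definition shadows :: "('a::metric_space \<Rightarrow> 'a) \<Rightarrow> real \<Rightarrow> 'a \<Rightarrow> (nat \<Rightarrow> 'a) \<Rightarrow> bool" where
  "shadows f \<epsilon> x xs \<longleftrightarrow> (\<forall>i. dist ((f ^^ i) x) (xs i) \<le> \<epsilon>)"

definition lipschitz_shadowing :: "'a::metric_space set \<Rightarrow> ('a \<Rightarrow> 'a) \<Rightarrow> real \<Rightarrow> bool" where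
  "lipschitz_shadowing X f L \<longleftrightarrow>
     (\<exists>\<delta>0>0. \<forall>\<delta>. 0 < \<delta> \<and> \<delta> \<le> \<delta>0 \<longrightarrow>
        (\<forall>xs. pseudo_orbit X f \<delta> xs \<longrightarrow> (\<exists>x\<in>X. shadows f (L * \<delta>) x xs)))"

definition chain_recurrent_set :: "'a::metric_space set \<Rightarrow> ('a \<Rightarrow> 'a) \<Rightarrow> 'a set" where
  "chain_recurrent_set X f = {x \<in> X. \<forall>\<delta>>0. \<exists>k::nat. \<exists>xs::nat \<Rightarrow> 'a. k \<ge> 1 \<and>
      (\<forall>i\<le>k. xs i \<in> X) \<and> xs 0 = x \<and> xs k = x \<and>
      (\<forall>i<k. dist (f (xs i)) (xs (Suc i)) \<le> \<delta>)}"

definition periodic_points :: "'a set \<Rightarrow> ('a \<Rightarrow> 'a) \<Rightarrow> 'a set" where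
  "periodic_points X f = {x \<in> X. \<exists>i>0. (f ^^ i) x = x}"

end

theory Submission
  imports Defs
begin

text \<open>
  A \<delta>-cycle through x of length k, repeated forever, is a periodic \<delta>-pseudo orbit; a point
  shadowing it within L\<delta> lies within L\<delta> of x and returns within 2L\<delta> of itself after k steps.
  So it is an approximate fixed point of f^k with defect 2L\<delta>, whose own orbit segment is a
  2L\<delta>-cycle. Shadowing again improves the defect by the factor 2L < 1 while moving the point
  by at most L times the current defect; by compactness these corrections accumulate at a fixed
  point of f^k within L\<delta>/(1 - 2L) of x. Conversely, periodic orbits are cycles and the chain
  recurrent set is closed.
\<close>

definition delta_cycle :: "'a::metric_space set \<Rightarrow> ('a \<Rightarrow> 'a) \<Rightarrow> real \<Rightarrow> 'a \<Rightarrow> nat \<Rightarrow> (nat \<Rightarrow> 'a) \<Rightarrow> bool" where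
  "delta_cycle X f \<delta> x k xs \<longleftrightarrow> k \<ge> 1 \<and> (\<forall>i\<le>k. xs i \<in> X) \<and> xs 0 = x \<and> xs k = x \<and>
     (\<forall>i<k. dist (f (xs i)) (xs (Suc i)) \<le> \<delta>)"

lemma chain_recurrent_set_iff:
  "x \<in> chain_recurrent_set X f \<longleftrightarrow> x \<in> X \<and> (\<forall>\<delta>>0. \<exists>k xs. delta_cycle X f \<delta> x k xs)"
  unfolding chain_recurrent_set_def delta_cycle_def by blast

lemma funpow_in_invariant:
  assumes "f ` X \<subseteq> X" "y \<in> X" shows "(f ^^ n) y \<in> X"
  using assms by (induction n) auto

lemma continuous_on_funpow:
  assumes "f ` X \<subseteq> X" "continuous_on X f" shows "continuous_on X (f ^^ n)"
proof (induction n)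
  case 0
  then show ?case by (simp add: continuous_on_id)
next
  case (Suc n)
  have "(f ^^ n) ` X \<subseteq> X" using funpow_in_invariant[OF assms(1)] by blast
  then show ?case
    using continuous_on_compose[OF Suc continuous_on_subset[OF assms(2)]] by simp
qed

lemma fixed_point_of_approximate_fixed_points:
  fixes g :: "'a::metric_space \<Rightarrow> 'a"
  assumes "compact X" and g: "continuous_on X g" and yX: "\<And>n. y n \<in> X"
    and defect: "(\<lambda>n. dist (g (y n)) (y n)) \<longlonglongrightarrow> 0" and bound: "\<And>n. dist (y n) a \<le> B"
  shows "\<exists>l\<in>X. g l = l \<and> dist l a \<le> B"
proof -
  obtain l r where lX: "l \<in> X" and r: "strict_mono r" and lim: "(y \<circ> r) \<longlonglongrightarrow> l"
    using seq_compactE[OF compact_imp_seq_compact[OF \<open>compact X\<close>]] yX by metis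
  have "(\<lambda>n. dist (g ((y \<circ> r) n)) ((y \<circ> r) n)) \<longlonglongrightarrow> dist (g l) l"
    using continuous_on_tendsto_compose[OF g lim lX] yX by (intro tendsto_dist lim) auto
  moreover have "(\<lambda>n. dist (g ((y \<circ> r) n)) ((y \<circ> r) n)) \<longlonglongrightarrow> 0"
    using LIMSEQ_subseq_LIMSEQ[OF defect r] by (simp add: comp_def)
  ultimately have "g l = l" using LIMSEQ_unique by fastforce
  moreover have "dist l a \<le> B"
    using tendsto_dist[OF lim tendsto_const] by (rule tendsto_upperbound) (auto simp: bound)
  ultimately show ?thesis using lX by blast
qed

lemma improved_approximate_fixed_points:
  fixes g :: "'a::metric_space \<Rightarrow> 'a"
  assumes q: "0 < q" "q < 1"
    and improve: "\<And>e y. 0 < e \<Longrightarrow> e \<le> e0 \<Longrightarrow> y \<in> X \<Longrightarrow> dist (g y) y \<le> e \<Longrightarrow>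
      \<exists>y'\<in>X. dist (g y') y' \<le> q * e \<and> dist y' y \<le> C * e"
    and y0: "y0 \<in> X" "0 < e0" "dist (g y0) y0 \<le> e0"
  shows "\<exists>y\<in>X. dist (g y) y \<le> q ^ n * e0 \<and> dist y y0 \<le> C * e0 * (1 - q ^ n) / (1 - q)"
proof (induction n)
  case 0
  then show ?case using y0 by auto
next
  case (Suc n)
  then obtain y where yX: "y \<in> X" and y_defect: "dist (g y) y \<le> q ^ n * e0"
    and y_dist: "dist y y0 \<le> C * e0 * (1 - q ^ n) / (1 - q)" by blast
  have "q ^ n * e0 \<le> e0" using q y0 by (simp add: mult_left_le_one_le power_le_one)
  then obtain y' where y'X: "y' \<in> X" and "dist (g y') y' \<le> q * (q ^ n * e0)"
    and y'_dist: "dist y' y \<le> C * (q ^ n * e0)"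
    using improve[OF _ _ yX y_defect] q y0 by auto
  moreover have "dist y' y0 \<le> C * e0 * (1 - q ^ Suc n) / (1 - q)"
  proof -
    have "C * (q ^ n * e0) + C * e0 * (1 - q ^ n) / (1 - q) = C * e0 * (1 - q ^ Suc n) / (1 - q)"
      using q by (simp add: field_simps)
    then show ?thesis using dist_triangle[of y' y0 y] y'_dist y_dist by linarith
  qed
  ultimately show ?case by (auto simp: mult.assoc)
qed

lemma fixed_point_near_improvable_approximate_fixed_point:
  fixes g :: "'a::metric_space \<Rightarrow> 'a"
  assumes "compact X" "continuous_on X g" and q: "0 < q" "q < 1" and "0 \<le> C"
    and improve: "\<And>e y. 0 < e \<Longrightarrow> e \<le> e0 \<Longrightarrow> y \<in> X \<Longrightarrow> dist (g y) y \<le> e \<Longrightarrow>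
      \<exists>y'\<in>X. dist (g y') y' \<le> q * e \<and> dist y' y \<le> C * e"
    and y0: "y0 \<in> X" "0 < e0" "dist (g y0) y0 \<le> e0"
  shows "\<exists>l\<in>X. g l = l \<and> dist l y0 \<le> C * e0 / (1 - q)"
proof -
  have "\<exists>y\<in>X. dist (g y) y \<le> q ^ n * e0 \<and> dist y y0 \<le> C * e0 * (1 - q ^ n) / (1 - q)" for n
    using q improve y0 by (rule improved_approximate_fixed_points)
  then obtain y where yX: "\<And>n. y n \<in> X" and y_defect: "\<And>n. dist (g (y n)) (y n) \<le> q ^ n * e0"
    and y_dist: "\<And>n. dist (y n) y0 \<le> C * e0 * (1 - q ^ n) / (1 - q)"
    by metis
  have defects: "(\<lambda>n. q ^ n * e0) \<longlonglongrightarrow> 0"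
    using q by (intro tendsto_mult_left_zero LIMSEQ_power_zero) auto
  have "(\<lambda>n. dist (g (y n)) (y n)) \<longlonglongrightarrow> 0"
    by (rule tendsto_sandwich[OF _ _ tendsto_const defects]) (auto simp: y_defect)
  moreover have "dist (y n) y0 \<le> C * e0 / (1 - q)" for n
  proof -
    have "C * e0 * (1 - q ^ n) \<le> C * e0"
      using q y0 \<open>0 \<le> C\<close> by (simp add: mult_left_le)
    then have "C * e0 * (1 - q ^ n) / (1 - q) \<le> C * e0 / (1 - q)"
      using q by (simp add: divide_right_mono)
    then show ?thesis using y_dist[of n] by linarith
  qed
  ultimately show ?thesis
    using fixed_point_of_approximate_fixed_points[of X g y] assms(1,2) yX by blast
qed

lemma delta_cycle_orbit_segment:
  assumes "f ` X \<subseteq> X" "y \<in> X" "k \<ge> 1" "dist ((f ^^ k) y) y \<le> \<delta>"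
  shows "delta_cycle X f \<delta> y k (\<lambda>i. if i = k then y else (f ^^ i) y)"
  unfolding delta_cycle_def
proof (intro conjI allI impI)
  have "0 \<le> \<delta>" using assms(4) zero_le_dist order_trans by blast
  fix i assume "i < k"
  with \<open>0 \<le> \<delta>\<close> show "dist (f (if i = k then y else (f ^^ i) y))
    (if Suc i = k then y else (f ^^ Suc i) y) \<le> \<delta>"
    using assms(4) dist_commute by (cases "Suc i = k") auto
qed (use assms funpow_in_invariant in auto)

lemma pseudo_orbit_repeated_cycle:
  assumes "delta_cycle X f \<delta> x k xs"
  shows "pseudo_orbit X f \<delta> (\<lambda>i. xs (i mod k))"
  unfolding pseudo_orbit_def
proof (intro conjI allI)
  have k: "k > 0" and xsX: "\<And>i. i \<le> k \<Longrightarrow> xs i \<in> X" and closed: "xs k = xs 0"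
    and chain: "\<And>i. i < k \<Longrightarrow> dist (f (xs i)) (xs (Suc i)) \<le> \<delta>"
    using assms unfolding delta_cycle_def by auto
  fix i
  show "xs (i mod k) \<in> X" using k by (intro xsX) (simp add: less_imp_le)
  have "xs (Suc i mod k) = xs (Suc (i mod k))"
    using closed by (simp add: mod_Suc)
  then show "dist (f (xs (i mod k))) (xs (Suc i mod k)) \<le> \<delta>"
    using chain k by simp
qed

lemma shadowing_repeated_cycle:
  assumes "delta_cycle X f \<delta> x k xs" "shadows f \<epsilon> z (\<lambda>i. xs (i mod k))"
  shows "dist z x \<le> \<epsilon>" and "dist ((f ^^ k) z) z \<le> 2 * \<epsilon>"
proof -
  have ends: "xs 0 = x" "xs k = x" using assms(1) unfolding delta_cycle_def by auto
  show start: "dist z x \<le> \<epsilon>"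
    using assms(2) ends unfolding shadows_def by (metis funpow_0 mod_0)
  have "dist ((f ^^ k) z) x \<le> \<epsilon>"
    using assms(2) ends unfolding shadows_def by (metis mod_self)
  then show "dist ((f ^^ k) z) z \<le> 2 * \<epsilon>"
    using start dist_triangle2[of "(f ^^ k) z" z x] by simp
qed

lemma lipschitz_shadowing_cycleE:
  assumes "lipschitz_shadowing X f L"
  obtains \<delta>0 where "0 < \<delta>0"
    and "\<And>\<delta> x k xs. 0 < \<delta> \<Longrightarrow> \<delta> \<le> \<delta>0 \<Longrightarrow> delta_cycle X f \<delta> x k xs \<Longrightarrow>
           \<exists>z\<in>X. dist z x \<le> L * \<delta> \<and> dist ((f ^^ k) z) z \<le> 2 * L * \<delta>"
proof -
  obtain \<delta>0 where "0 < \<delta>0" and sh: "\<And>\<delta> xs. 0 < \<delta> \<Longrightarrow> \<delta> \<le> \<delta>0 \<Longrightarrow> pseudo_orbit X f \<delta> xs \<Longrightarrow>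
      \<exists>z\<in>X. shadows f (L * \<delta>) z xs"
    using assms unfolding lipschitz_shadowing_def by blast
  show thesis
  proof (rule that[OF \<open>0 < \<delta>0\<close>])
    fix \<delta> x k xs assume "0 < \<delta>" "\<delta> \<le> \<delta>0" and cycle: "delta_cycle X f \<delta> x k xs"
    then obtain z where "z \<in> X" and z: "shadows f (L * \<delta>) z (\<lambda>i. xs (i mod k))"
      using sh pseudo_orbit_repeated_cycle by blast
    moreover have "dist z x \<le> L * \<delta>" "dist ((f ^^ k) z) z \<le> 2 * L * \<delta>"
      using shadowing_repeated_cycle[OF cycle z] by (simp_all add: mult.assoc)
    ultimately show "\<exists>z\<in>X. dist z x \<le> L * \<delta> \<and> dist ((f ^^ k) z) z \<le> 2 * L * \<delta>"
      by blast
  qed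
qed

lemma periodic_points_subset_chain_recurrent_set:
  assumes "f ` X \<subseteq> X"
  shows "periodic_points X f \<subseteq> chain_recurrent_set X f"
proof
  fix p assume "p \<in> periodic_points X f"
  then obtain n where p: "p \<in> X" "n \<ge> 1" "(f ^^ n) p = p"
    unfolding periodic_points_def by (auto simp: Suc_le_eq)
  have "delta_cycle X f \<delta> p n (\<lambda>i. if i = n then p else (f ^^ i) p)" if "\<delta> > 0" for \<delta>
    using delta_cycle_orbit_segment[OF assms p(1,2)] p(3) that by simp
  then show "p \<in> chain_recurrent_set X f"
    unfolding chain_recurrent_set_iff using p by blast
qed

text \<open>A \<delta>/3-cycle through a point z near x becomes a \<delta>-cycle through x after replacing its
  two endpoints by x.\<close>
lemma closed_chain_recurrent_set:
  assumes "closed X" and cont: "continuous_on X f"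
  shows "closed (chain_recurrent_set X f)"
proof -
  have "x \<in> chain_recurrent_set X f" if x: "x \<in> closure (chain_recurrent_set X f)" for x
  proof -
    have "chain_recurrent_set X f \<subseteq> X" by (auto simp: chain_recurrent_set_def)
    then have xX: "x \<in> X" using x closure_minimal[OF _ \<open>closed X\<close>] by blast
    have "\<exists>k ys. delta_cycle X f \<delta> x k ys" if "\<delta> > 0" for \<delta>
    proof -
      have "\<delta> / 3 > 0" using \<open>\<delta> > 0\<close> by simp
      then obtain \<eta> where "\<eta> > 0"
        and near: "\<And>y. y \<in> X \<Longrightarrow> dist y x < \<eta> \<Longrightarrow> dist (f y) (f x) < \<delta> / 3"
        using cont xX unfolding continuous_on_iff by metis
      then obtain z where zCR: "z \<in> chain_recurrent_set X f" and zx: "dist z x < min \<eta> (\<delta> / 3)"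
        using x \<open>\<delta> / 3 > 0\<close> unfolding closure_approachable by (metis min_less_iff_conj)
      then obtain k zs where zs: "delta_cycle X f (\<delta> / 3) z k zs"
        using \<open>\<delta> / 3 > 0\<close> unfolding chain_recurrent_set_iff by blast
      define ys where "ys i = (if i = 0 \<or> i = k then x else zs i)" for i
      have zsX: "zs i \<in> X" if "i \<le> k" for i using zs that unfolding delta_cycle_def by blast
      have moved: "dist (zs i) (ys i) < \<delta> / 3"
        and moved_image: "dist (f (ys i)) (f (zs i)) < \<delta> / 3" if "i \<le> k" for i
        using zs \<open>\<delta> > 0\<close> zx near[of z] zsX[OF \<open>i \<le> k\<close>] that
        unfolding ys_def delta_cycle_def by (auto simp: dist_commute)
      have "dist (f (ys i)) (ys (Suc i)) \<le> \<delta>" if "i < k" for i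
      proof -
        have "dist (f (zs i)) (zs (Suc i)) \<le> \<delta> / 3"
          using zs that unfolding delta_cycle_def by blast
        moreover have "dist (f (ys i)) (ys (Suc i)) \<le> dist (f (ys i)) (f (zs i)) +
            dist (f (zs i)) (zs (Suc i)) + dist (zs (Suc i)) (ys (Suc i))"
          by (metis add_right_mono dist_triangle order_trans)
        ultimately show ?thesis using moved[of "Suc i"] moved_image[of i] that by linarith
      qed
      then have "delta_cycle X f \<delta> x k ys"
        using zs xX zsX unfolding delta_cycle_def ys_def by auto
      then show ?thesis by blast
    qed
    then show ?thesis using xX unfolding chain_recurrent_set_iff by blast
  qed
  then show ?thesis using closure_subset_eq by blast
qed

lemma lipschitz_shadowing_fixed_point_near_cycleE:
  assumes "compact X" and fX: "f ` X \<subseteq> X" and "continuous_on X f"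
    and L: "0 < L" "L < 1/2" and "lipschitz_shadowing X f L"
  obtains \<delta>0 where "0 < \<delta>0"
    and "\<And>\<delta> x k xs. 0 < \<delta> \<Longrightarrow> \<delta> \<le> \<delta>0 \<Longrightarrow> delta_cycle X f \<delta> x k xs \<Longrightarrow>
           \<exists>l\<in>X. (f ^^ k) l = l \<and> dist l x \<le> L * \<delta> / (1 - 2 * L)"
proof -
  obtain \<delta>0 where "0 < \<delta>0" and shadow_cycle: "\<And>\<delta> x k xs. 0 < \<delta> \<Longrightarrow> \<delta> \<le> \<delta>0 \<Longrightarrow>
      delta_cycle X f \<delta> x k xs \<Longrightarrow> \<exists>z\<in>X. dist z x \<le> L * \<delta> \<and> dist ((f ^^ k) z) z \<le> 2 * L * \<delta>"
    using lipschitz_shadowing_cycleE[OF \<open>lipschitz_shadowing X f L\<close>] by blast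
  show thesis
  proof (rule that[OF \<open>0 < \<delta>0\<close>])
    fix \<delta> x k xs assume \<delta>: "0 < \<delta>" "\<delta> \<le> \<delta>0" and cycle: "delta_cycle X f \<delta> x k xs"
    then have k: "k \<ge> 1" unfolding delta_cycle_def by blast
    obtain z where zX: "z \<in> X" and zx: "dist z x \<le> L * \<delta>"
      and z_return: "dist ((f ^^ k) z) z \<le> 2 * L * \<delta>"
      using shadow_cycle[OF \<delta> cycle] by blast
    have improve: "\<exists>y'\<in>X. dist ((f ^^ k) y') y' \<le> 2 * L * e \<and> dist y' y \<le> L * e"
      if "0 < e" "e \<le> 2 * L * \<delta>" "y \<in> X" "dist ((f ^^ k) y) y \<le> e" for e y
    proof -
      have "2 * L * \<delta> \<le> 1 * \<delta>" using L \<delta> by (intro mult_right_mono) auto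
      then have "e \<le> \<delta>0" using that \<delta> by linarith
      then show ?thesis
        using shadow_cycle[OF \<open>0 < e\<close> _ delta_cycle_orbit_segment[OF fX that(3) k that(4)]]
        by blast
    qed
    have "0 < 2 * L" "2 * L < 1" "0 \<le> L" "0 < 2 * L * \<delta>" using L \<delta> by auto
    then have "\<exists>l\<in>X. (f ^^ k) l = l \<and> dist l z \<le> L * (2 * L * \<delta>) / (1 - 2 * L)"
      using \<open>compact X\<close> continuous_on_funpow[OF fX \<open>continuous_on X f\<close>] improve zX z_return
      by (intro fixed_point_near_improvable_approximate_fixed_point) blast+
    then obtain l where "l \<in> X" "(f ^^ k) l = l" and lz: "dist l z \<le> L * (2 * L * \<delta>) / (1 - 2 * L)"
      by blast
    moreover have "dist l x \<le> L * \<delta> / (1 - 2 * L)"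
    proof -
      have "L * (2 * L * \<delta>) / (1 - 2 * L) + L * \<delta> = L * \<delta> / (1 - 2 * L)"
        using L by (simp add: field_simps)
      then show ?thesis using dist_triangle[of l x z] lz zx by linarith
    qed
    ultimately show "\<exists>l\<in>X. (f ^^ k) l = l \<and> dist l x \<le> L * \<delta> / (1 - 2 * L)"
      by blast
  qed
qed

lemma chain_recurrent_set_subset_closure_periodic_points:
  fixes X :: "'a::metric_space set"
  assumes "compact X" and "f ` X \<subseteq> X" and "continuous_on X f"
    and L: "0 < L" "L < 1/2" and "lipschitz_shadowing X f L"
  shows "chain_recurrent_set X f \<subseteq> closure (periodic_points X f)"
proof
  obtain \<delta>0 where "0 < \<delta>0" and periodic_near_cycle: "\<And>\<delta> x k xs. 0 < \<delta> \<Longrightarrow> \<delta> \<le> \<delta>0 \<Longrightarrow>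
      delta_cycle X f \<delta> x k xs \<Longrightarrow> \<exists>l\<in>X. (f ^^ k) l = l \<and> dist l x \<le> L * \<delta> / (1 - 2 * L)"
    using lipschitz_shadowing_fixed_point_near_cycleE[OF assms] by blast
  fix x assume x: "x \<in> chain_recurrent_set X f"
  show "x \<in> closure (periodic_points X f)"
    unfolding closure_approachable_le
  proof (intro allI impI)
    fix \<epsilon> :: real assume "\<epsilon> > 0"
    define \<delta> where "\<delta> = min \<delta>0 (\<epsilon> * (1 - 2 * L) / L)"
    have \<delta>: "0 < \<delta>" "\<delta> \<le> \<delta>0" using \<open>0 < \<delta>0\<close> \<open>\<epsilon> > 0\<close> L by (auto simp: \<delta>_def)
    have "\<delta> \<le> \<epsilon> * (1 - 2 * L) / L" by (simp add: \<delta>_def)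
    then have small: "L * \<delta> / (1 - 2 * L) \<le> \<epsilon>" using L by (simp add: field_simps)
    obtain k xs where cycle: "delta_cycle X f \<delta> x k xs"
      using x \<delta> unfolding chain_recurrent_set_iff by blast
    then have "k > 0" unfolding delta_cycle_def by simp
    obtain l where "l \<in> X" "(f ^^ k) l = l" and "dist l x \<le> L * \<delta> / (1 - 2 * L)"
      using periodic_near_cycle[OF \<delta> cycle] by blast
    with \<open>k > 0\<close> small show "\<exists>y\<in>periodic_points X f. dist y x \<le> \<epsilon>"
      unfolding periodic_points_def by fastforce
  qed
qed

theorem theorem1p2:
  fixes X :: "'a::metric_space set" and f :: "'a \<Rightarrow> 'a" and L :: real
  assumes "compact X"
    and "f ` X \<subseteq> X"
    and "continuous_on X f"
    and "0 < L" and "L < 1/2"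
    and "lipschitz_shadowing X f L"
  shows "chain_recurrent_set X f = closure (periodic_points X f)"
proof
  show "chain_recurrent_set X f \<subseteq> closure (periodic_points X f)"
    using chain_recurrent_set_subset_closure_periodic_points[OF assms] .
  have "closed (chain_recurrent_set X f)"
    using closed_chain_recurrent_set[OF compact_imp_closed[OF \<open>compact X\<close>] \<open>continuous_on X f\<close>] .
  then show "closure (periodic_points X f) \<subseteq> chain_recurrent_set X f"
    using closure_minimal periodic_points_subset_chain_recurrent_set[OF \<open>f ` X \<subseteq> X\<close>] by blast
qed

end
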